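(* Let $R$ be an associative ring with identity and involution $*$, and let $a\in R^{\#}\cap R^{\dagger}$. Then $a\in R^{SEP}$ if and only if $a(a^{\#})^*a^{\dagger}$ is a right $a$-idempotent, i.e. $(a(a^{\#})^*a^{\dagger})^2=a(a^{\#})^*a^{\dagger}a$.
   Context: An involution on $R$ is a map $x\mapsto x^*$ with $(x^* )^*=x$, $(x+y)^*=x^*+y^*$, $(xy)^*=y^*x^*$. An element $a$ is Moore–Penrose invertible if there is $b$ with $aba=a$, $bab=b$, $(ab)^*=ab$, $(ba)^*=ba$; such $b$ is unique, denoted $a^{\dagger}$, and $R^{\dagger}$ is the set of such $a$. An element $a$ is group invertible if there is $b$ with $aba=a$, $bab=b$, $ab=ba$; such $b$ is unique, denoted $a^{\#}$, and $R^{\#}$ is the set of such $a$. For $a\in R^{\#}\cap R^{\dagger}$, $a$ is SEP if $a^*=a^{\dagger}=a^{\#}$; $R^{SEP}$ denotes the set of SEP elements. For $e,c\in R$, $e$ is a right $c$-idempotent if $e^2=ec$. *)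

theory Defs
  imports Main
begin

definition involution :: "('a::ring_1 \<Rightarrow> 'a) \<Rightarrow> bool" where
  "involution s \<longleftrightarrow> (\<forall>x. s (s x) = x) \<and> (\<forall>x y. s (x + y) = s x + s y)
                      \<and> (\<forall>x y. s (x * y) = s y * s x)"

definition is_mp_inverse :: "('a::ring_1 \<Rightarrow> 'a) \<Rightarrow> 'a \<Rightarrow> 'a \<Rightarrow> bool" where
  "is_mp_inverse s a b \<longleftrightarrow> a * b * a = a \<and> b * a * b = b \<and> s (a * b) = a * b \<and> s (b * a) = b * a"

definition mp_invertible :: "('a::ring_1 \<Rightarrow> 'a) \<Rightarrow> 'a \<Rightarrow> bool" where
  "mp_invertible s a \<longleftrightarrow> (\<exists>b. is_mp_inverse s a b)"

definition mp_inv :: "('a::ring_1 \<Rightarrow> 'a) \<Rightarrow> 'a \<Rightarrow> 'a" where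
  "mp_inv s a = (THE b. is_mp_inverse s a b)"

definition is_group_inverse :: "'a::ring_1 \<Rightarrow> 'a \<Rightarrow> bool" where
  "is_group_inverse a b \<longleftrightarrow> a * b * a = a \<and> b * a * b = b \<and> a * b = b * a"

definition group_invertible :: "'a::ring_1 \<Rightarrow> bool" where
  "group_invertible a \<longleftrightarrow> (\<exists>b. is_group_inverse a b)"

definition group_inv :: "'a::ring_1 \<Rightarrow> 'a" where
  "group_inv a = (THE b. is_group_inverse a b)"

definition SEP :: "('a::ring_1 \<Rightarrow> 'a) \<Rightarrow> 'a \<Rightarrow> bool" where
  "SEP s a \<longleftrightarrow> group_invertible a \<and> mp_invertible s a \<and> s a = mp_inv s a \<and> mp_inv s a = group_inv a"

definition right_idempotent :: "'a::ring_1 \<Rightarrow> 'a \<Rightarrow> bool" where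
  "right_idempotent c e \<longleftrightarrow> e * e = e * c"

end

theory Submission
  imports Defs
begin

text \<open>
  Write \<open>g = a\<^sup>#\<close> and \<open>m = a\<^sup>\<dagger>\<close>. Since \<open>m a g\<^sup>* = g\<^sup>*\<close>, right
  \<open>a\<close>-idempotence of \<open>a g\<^sup>* m\<close> reduces, after left multiplication by \<open>m\<close> and
  then by \<open>a\<^sup>*\<close>, to \<open>g\<^sup>* m = m a\<close>. Starring this identity and multiplying on
  the left by \<open>a\<^sup>*\<close> gives \<open>m a g = m\<close>, hence \<open>a m = a g\<close>, so \<open>g\<close> satisfies
  the Penrose equations and \<open>m = g\<close>; then \<open>g\<^sup>* g = g a\<close> forces \<open>a\<^sup>* = g\<close>.
  The converse is immediate, since for a SEP element \<open>a g\<^sup>* m = a a g = a\<close>.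
\<close>

lemma involution_involutive: "involution s \<Longrightarrow> s (s x) = x"
  by (simp add: involution_def)

lemma involution_mult: "involution s \<Longrightarrow> s (x * y) = s y * s x"
  by (simp add: involution_def)

lemma is_mp_inverse_unique:
  assumes "involution s" and "is_mp_inverse s a b" and "is_mp_inverse s a c"
  shows "b = c"
proof -
  note star = involution_mult[OF assms(1)]
  have b: "a * b * a = a" "b * a * b = b" "s (a * b) = a * b" "s (b * a) = b * a"
    and c: "a * c * a = a" "c * a * c = c" "s (a * c) = a * c" "s (c * a) = c * a"
    using assms(2,3) by (auto simp: is_mp_inverse_def)
  have "a * b = s b * s (a * c * a)"
    using b(3) c(1) star by metis
  also have "\<dots> = s (a * b) * s (a * c)"
    by (simp add: star mult.assoc)
  also have "\<dots> = a * c"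
    using b(1,3) c(3) by (simp add: mult.assoc[symmetric])
  finally have ab: "a * b = a * c" .
  have "b * a = s (a * c * a) * s b"
    using b(4) c(1) star by metis
  also have "\<dots> = s (c * a) * s (b * a)"
    by (simp add: star mult.assoc)
  also have "\<dots> = c * a"
    using b(1,4) c(4) by (simp add: mult.assoc)
  finally have ba: "b * a = c * a" .
  have "b = b * a * c"
    using ab b(2) by (metis mult.assoc)
  also have "\<dots> = c"
    using ba c(2) by simp
  finally show ?thesis .
qed

lemma is_group_inverse_unique:
  assumes "is_group_inverse a b" and "is_group_inverse a c"
  shows "b = c"
proof -
  have b: "a * b * a = a" "b * a * b = b" "a * b = b * a"
    and c: "a * c * a = a" "c * a * c = c" "a * c = c * a"
    using assms by (auto simp: is_group_inverse_def)
  have "a * b = a * c * a * b"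
    using c(1) by simp
  also have "\<dots> = a * c"
    using b c(3) by (metis mult.assoc)
  finally have "a * b = a * c" .
  then show ?thesis
    using b c by (metis mult.assoc)
qed

lemma mp_inv_is_mp_inverse:
  assumes "involution s" and "mp_invertible s a"
  shows "is_mp_inverse s a (mp_inv s a)"
  using assms is_mp_inverse_unique unfolding mp_inv_def mp_invertible_def
  by (metis theI)

lemma group_inv_is_group_inverse:
  assumes "group_invertible a"
  shows "is_group_inverse a (group_inv a)"
  using assms is_group_inverse_unique unfolding group_inv_def group_invertible_def
  by (metis theI)

context
  fixes s :: "'a::ring_1 \<Rightarrow> 'a" and a m :: 'a
  assumes inv: "involution s"
    and mp: "is_mp_inverse s a m"
begin

private lemmas star_mult = involution_mult[OF inv]

private lemma mp_eqs: "a * m * a = a" "m * a * m = m" "s (a * m) = a * m" "s (m * a) = m * a"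
  using mp by (auto simp: is_mp_inverse_def)

lemma mp_inverse_mult_star: "m * a * s a = s a"
proof -
  have "s a = s (a * m * a)"
    using mp_eqs(1) by simp
  also have "\<dots> = s (m * a) * s a"
    by (simp add: star_mult mult.assoc)
  finally show ?thesis
    using mp_eqs(4) by simp
qed

context
  fixes g :: 'a
  assumes grp: "is_group_inverse a g"
begin

private lemma grp_eqs: "a * g * a = a" "g * a * g = g" "a * g = g * a"
  using grp by (auto simp: is_group_inverse_def)

private lemma star_group_inverse_eq: "s a * s g * s g = s g"
proof -
  have "g * g * a = g"
    using grp_eqs by (metis mult.assoc)
  then show ?thesis
    by (metis star_mult mult.assoc)
qed

lemma mp_inverse_mult_star_group_inverse: "m * a * s g = s g"
proof -
  have "m * a * s g = m * a * s a * s g * s g"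
    using star_group_inverse_eq by (simp add: mult.assoc)
  also have "\<dots> = s g"
    using mp_inverse_mult_star star_group_inverse_eq by simp
  finally show ?thesis .
qed

lemma star_group_projection_mult_mp_projection: "s (g * a) * m * a = m * a"
proof -
  have "s (g * a) * m * a = s (m * a * g * a)"
    using mp_eqs(4) by (simp add: star_mult mult.assoc)
  also have "\<dots> = m * a"
    using grp_eqs(1) mp_eqs(4) by (simp add: mult.assoc)
  finally show ?thesis .
qed

lemma right_idempotent_imp_star_group_inverse_mult:
  assumes "right_idempotent a (a * s g * m)"
  shows "s g * m = m * a"
proof -
  have "(a * s g * m) * (a * s g * m) = a * s g * (m * a * s g) * m"
    by (simp add: mult.assoc)
  also have "\<dots> = a * s g * s g * m"
    by (simp add: mp_inverse_mult_star_group_inverse)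
  finally have "a * s g * s g * m = a * s g * m * a"
    using assms by (simp add: right_idempotent_def)
  then have "m * a * s g * s g * m = m * a * s g * m * a"
    by (simp add: mult.assoc)
  then have "s g * s g * m = s g * m * a"
    using mp_inverse_mult_star_group_inverse by simp
  then have "s a * s g * s g * m = s a * s g * m * a"
    by (simp add: mult.assoc)
  then show ?thesis
    using star_group_inverse_eq star_group_projection_mult_mp_projection
    by (simp add: star_mult)
qed

lemma mp_inverse_eq_group_inverse:
  assumes "s g * m = m * a"
  shows "m = g"
proof -
  have "s (g * a) * m = m"
    using star_group_projection_mult_mp_projection mp_eqs(2) by (metis mult.assoc)
  then have "s a * m * a = m"
    using assms star_mult by (metis mult.assoc)
  moreover have "s a * s m = m * a"
    using mp_eqs(4) star_mult by metis
  moreover have "s m * g = m * a"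
    using arg_cong[OF assms, of s] mp_eqs(4) star_mult involution_involutive[OF inv] by metis
  ultimately have "m * a * g = m"
    by (metis mult.assoc)
  then have "a * m = a * g"
    using mp_eqs(1) by (metis mult.assoc)
  then have "is_mp_inverse s a g"
    using grp_eqs mp_eqs(3) by (auto simp: is_mp_inverse_def)
  then show ?thesis
    using is_mp_inverse_unique[OF inv mp] by blast
qed

lemma star_eq_group_inverse:
  assumes "s g * m = m * a"
  shows "s a = g"
proof -
  have "m = g"
    using assms by (rule mp_inverse_eq_group_inverse)
  then have ag: "s (a * g) = a * g" "g * a = a * g"
    using mp_eqs(3) grp_eqs(3) by auto
  have "g = s (g * a) * g"
    using ag grp_eqs(2) by (simp add: mult.assoc)
  also have "\<dots> = s a * (s g * g)"
    by (simp add: star_mult mult.assoc)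
  also have "\<dots> = s a * s (a * g)"
    using assms \<open>m = g\<close> ag by simp
  also have "\<dots> = s (a * g * a)"
    by (simp add: star_mult mult.assoc)
  also have "\<dots> = s a"
    using grp_eqs(1) by simp
  finally show ?thesis ..
qed

end

end

theorem theorem3p5:
  fixes s :: "'a::ring_1 \<Rightarrow> 'a" and a :: 'a
  assumes "involution s"
    and "group_invertible a"
    and "mp_invertible s a"
  shows "SEP s a \<longleftrightarrow>
           right_idempotent a (a * s (group_inv a) * mp_inv s a)"
proof -
  define g m where "g = group_inv a" and "m = mp_inv s a"
  have grp: "is_group_inverse a g"
    using assms(2) unfolding g_def by (rule group_inv_is_group_inverse)
  have mp: "is_mp_inverse s a m"
    using assms(1,3) unfolding m_def by (rule mp_inv_is_mp_inverse)
  have "SEP s a \<longleftrightarrow> s a = m \<and> m = g"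
    using assms(2,3) by (simp add: SEP_def g_def m_def)
  also have "\<dots> \<longleftrightarrow> right_idempotent a (a * s g * m)"
  proof
    assume "s a = m \<and> m = g"
    then have "a * s g * m = a"
      using grp involution_involutive[OF assms(1)]
      by (auto simp: is_group_inverse_def mult.assoc)
    then show "right_idempotent a (a * s g * m)"
      by (simp add: right_idempotent_def)
  next
    assume "right_idempotent a (a * s g * m)"
    then have "s g * m = m * a"
      by (rule right_idempotent_imp_star_group_inverse_mult[OF assms(1) mp grp])
    then show "s a = m \<and> m = g"
      using mp_inverse_eq_group_inverse[OF assms(1) mp grp]
        star_eq_group_inverse[OF assms(1) mp grp] by simp
  qed
  finally show ?thesis
    by (simp add: g_def m_def)
qed

end
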